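(* Let $(\zeta,x,y)$ be isothermal boundary-compatible toroidal coordinates on $\widetilde Q$, and let $\bm u_\zeta$ be a vector field on $D$ tangent to $\partial D$. With $\bm r=x\,\partial_x+y\,\partial_y$ and $\bm N_\zeta$ the shift vector of $(\zeta,x,y)$, we have $\bm r\cdot(\bm u_\zeta+\bm N_\zeta)=0$ on $\partial D$, where $\cdot$ is the standard Euclidean dot product on $\mathbb{R}^2$.
   Context: $D$ is the closed unit disc. $Q\subset\mathbb{R}^3$ is a toroidal domain: a submanifold with boundary with an orientation-preserving diffeomorphism $(\zeta,x,y):Q\to S^1\times D$; $\widetilde Q$ is its universal cover with pulled-back Euclidean metric $\widetilde g$ and lifted toroidal coordinates $(\zeta,x,y):\widetilde Q\to\mathbb{R}\times D$; $I_\zeta:D\to\widetilde Q$, $I_\zeta(x,y)=(\zeta,x,y)$. Hypersurface metric $h_\zeta=I_\zeta^*\widetilde g$; shift vector $\bm N_\zeta$ is the vector field on $D$ with $\iota_{\bm N_\zeta}h_\zeta=I_\zeta^*(\iota_{\partial_\zeta}\widetilde g)$. The coordinates are boundary-compatible if at every point of $\partial\widetilde Q$ the outward unit normal $\bm n$ satisfies $d\zeta(\bm n)=0$, and isothermal if $h_\zeta=f_\zeta(dx^2+dy^2)$ for some nowhere-vanishing function $f_\zeta$. *)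

theory Defs
  imports "HOL-Analysis.Analysis"
begin

text \<open>Points of the universal cover are represented by their lifted toroidal
coordinates (zeta, (x,y)) in R x D.  The map Phi sends such a coordinate triple to
the corresponding point of Q in R^3 (covering projection composed with the inverse
of the lifted coordinates); DPhi q is its derivative at q.\<close>

type_synonym coord = "real \<times> (real^2)"

definition disc :: "(real^2) set" where
  "disc = cball 0 1"

definition gmet :: "(coord \<Rightarrow> coord \<Rightarrow> real^3) \<Rightarrow> coord \<Rightarrow> coord \<Rightarrow> coord \<Rightarrow> real" where
  "gmet D\<Phi> q a b = inner (D\<Phi> q a) (D\<Phi> q b)"

text \<open>Hypersurface metric h_zeta = I_zeta^* g~ (dI_zeta w = (0,w)).\<close>
definition hmet :: "(coord \<Rightarrow> coord \<Rightarrow> real^3) \<Rightarrow> real \<Rightarrow> real^2 \<Rightarrow> real^2 \<Rightarrow> real^2 \<Rightarrow> real" where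
  "hmet D\<Phi> \<zeta> p v w = gmet D\<Phi> (\<zeta>, p) (0, v) (0, w)"

text \<open>Shift vector: iota_N h_zeta = I_zeta^*(iota_{d/dzeta} g~).\<close>
definition shift_vector :: "(coord \<Rightarrow> coord \<Rightarrow> real^3) \<Rightarrow> real \<Rightarrow> real^2 \<Rightarrow> real^2" where
  "shift_vector D\<Phi> \<zeta> p =
     (THE N. \<forall>w. hmet D\<Phi> \<zeta> p N w = gmet D\<Phi> (\<zeta>, p) (1, 0) (0, w))"

text \<open>Toroidal coordinates with zeta-period L: Phi is periodic in zeta, injective
on [0,L) x D (so descends to an embedding of S^1 x D onto Q), C^1 up to the boundary,
with invertible, orientation-preserving derivative.\<close>
definition toroidal_coordinates ::
  "(coord \<Rightarrow> real^3) \<Rightarrow> (coord \<Rightarrow> coord \<Rightarrow> real^3) \<Rightarrow> real \<Rightarrow> (real^3) set \<Rightarrow> bool" where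
  "toroidal_coordinates \<Phi> D\<Phi> L Q \<longleftrightarrow>
     L > 0 \<and> Q = \<Phi> ` (UNIV \<times> disc) \<and>
     (\<forall>\<zeta> p. p \<in> disc \<longrightarrow> \<Phi> (\<zeta> + L, p) = \<Phi> (\<zeta>, p)) \<and>
     inj_on \<Phi> ({0..<L} \<times> disc) \<and>
     (\<forall>q \<in> UNIV \<times> disc. (\<Phi> has_derivative D\<Phi> q) (at q within UNIV \<times> disc)) \<and>
     (\<forall>a. continuous_on (UNIV \<times> disc) (\<lambda>q. D\<Phi> q a)) \<and>
     (\<forall>q \<in> UNIV \<times> disc.
        det (vector [D\<Phi> q (1, 0), D\<Phi> q (0, vector [1, 0]), D\<Phi> q (0, vector [0, 1])]
              :: real^3^3) > 0)"

definition isothermal :: "(coord \<Rightarrow> coord \<Rightarrow> real^3) \<Rightarrow> bool" where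
  "isothermal D\<Phi> \<longleftrightarrow>
     (\<forall>\<zeta>. \<exists>f :: real^2 \<Rightarrow> real. \<forall>p \<in> disc. f p \<noteq> 0 \<and>
        (\<forall>v w. hmet D\<Phi> \<zeta> p v w = f p * inner v w))"

text \<open>Outward unit normal (in coordinate components) to the boundary of the
universal cover at the boundary point q = (zeta,p), |p| = 1.  The tangent space of
the boundary there is {(s,w). w . p = 0}.\<close>
definition outward_unit_normal :: "(coord \<Rightarrow> coord \<Rightarrow> real^3) \<Rightarrow> coord \<Rightarrow> coord \<Rightarrow> bool" where
  "outward_unit_normal D\<Phi> q n \<longleftrightarrow>
     gmet D\<Phi> q n n = 1 \<and>
     (\<forall>t. inner (snd t) (snd q) = 0 \<longrightarrow> gmet D\<Phi> q n t = 0) \<and>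
     inner (snd n) (snd q) > 0"

definition boundary_compatible :: "(coord \<Rightarrow> coord \<Rightarrow> real^3) \<Rightarrow> bool" where
  "boundary_compatible D\<Phi> \<longleftrightarrow>
     (\<forall>\<zeta> p n. norm p = 1 \<longrightarrow> outward_unit_normal D\<Phi> (\<zeta>, p) n \<longrightarrow> fst n = 0)"

end

theory Submission imports Defs
begin

(* At a boundary point (zeta, p) the pulled-back metric is an inner product on coordinate
   tangent vectors, so the boundary tangent plane {t. snd t . p = 0} has an outward unit
   normal n.  Boundary compatibility makes n horizontal, n = (0, w), and isothermality turns
   orthogonality of horizontal vectors into Euclidean orthogonality, so w is a positive
   multiple of p.  As d/dzeta is tangent to the boundary, g~(d/dzeta, (0, p)) = 0, and by the
   defining property of the shift vector this number is f_zeta(p) (N_zeta . p).  Together with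
   u . p = 0 this gives the claim. *)

lemma gram_representation:
  fixes D :: "'a::euclidean_space \<Rightarrow> 'b::euclidean_space"
  assumes lin: "linear D" and inj: "inj D"
  obtains n where "\<And>t. D n \<bullet> D t = z \<bullet> t"
proof -
  let ?M = "adjoint D \<circ> D"
  have lin_M: "linear ?M"
    using lin by (simp add: adjoint_linear linear_compose)
  have "inj ?M"
    unfolding linear_inj_iff_eq_0[OF lin_M]
  proof (intro allI impI)
    fix x assume "?M x = 0"
    then have "D x \<bullet> D x = 0"
      by (metis adjoint_works[OF lin] comp_apply inner_zero_right)
    then show "x = 0"
      using inj lin by (simp add: linear_inj_iff_eq_0)
  qed
  then obtain n where "?M n = z"
    using linear_inj_imp_surj[OF lin_M] by (metis surjD)
  then have "D n \<bullet> D t = z \<bullet> t" for t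
    by (metis adjoint_works[OF lin] comp_apply inner_commute)
  then show thesis by (rule that)
qed

lemma linear_inj_if_det_nonzero:
  fixes D :: "real \<times> (real^2) \<Rightarrow> real^3"
  assumes lin: "linear D"
    and det: "det (vector [D (1, 0), D (0, vector [1, 0]), D (0, vector [0, 1])] :: real^3^3) \<noteq> 0"
  shows "inj D"
  unfolding linear_inj_iff_eq_0[OF lin]
proof (intro allI impI)
  fix x assume "D x = 0"
  define M where "M = (vector [D (1, 0), D (0, vector [1, 0]), D (0, vector [0, 1])] :: real^3^3)"
  obtain s w where x: "x = (s, w)" by (cases x)
  have coords: "(s, w) = s *\<^sub>R (1, 0) + (w$1) *\<^sub>R (0, vector [1, 0]) + (w$2) *\<^sub>R (0, vector [0, 1])"
    by (simp add: vec_eq_iff forall_2)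
  have "D x = s *\<^sub>R D (1, 0) + (w$1) *\<^sub>R D (0, vector [1, 0]) + (w$2) *\<^sub>R D (0, vector [0, 1])"
    unfolding x by (subst coords) (simp only: linear_add[OF lin] linear_scale[OF lin])
  also have "\<dots> = transpose M *v vector [s, w$1, w$2]"
    by (simp add: vec_eq_iff M_def matrix_vector_mult_def transpose_def sum_3 algebra_simps)
  finally have ker: "transpose M *v vector [s, w$1, w$2] = 0"
    using \<open>D x = 0\<close> by simp
  have "invertible (transpose M)"
    using det by (simp add: invertible_det_nz M_def)
  then have "vector [s, w$1, w$2] = (0::real^3)"
    using ker matrix_left_invertible_ker unfolding invertible_def by blast
  then have "s = 0" "w$1 = 0" "w$2 = 0"
    by (auto simp: vec_eq_iff forall_3 elim: allE[of _ 1] allE[of _ 2] allE[of _ 3])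
  then show "x = 0"
    using x by (simp add: vec_eq_iff forall_2 zero_prod_def)
qed

lemma outward_unit_normal_exists:
  assumes lin: "linear (D\<Phi> q)" and inj: "inj (D\<Phi> q)" and "snd q \<noteq> 0"
  obtains n where "outward_unit_normal D\<Phi> q n"
proof -
  obtain m where "\<And>t. D\<Phi> q m \<bullet> D\<Phi> q t = (0, snd q) \<bullet> t"
    using gram_representation[OF lin inj] by blast
  then have m: "\<And>t. D\<Phi> q m \<bullet> D\<Phi> q t = snd t \<bullet> snd q"
    by (simp add: inner_prod_def inner_commute)
  define \<nu> where "\<nu> = norm (D\<Phi> q m)"
  have "D\<Phi> q m \<bullet> D\<Phi> q (0, snd q) > 0"
    using m \<open>snd q \<noteq> 0\<close> by simp
  then have "D\<Phi> q m \<noteq> 0"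
    by force
  then have "\<nu> > 0"
    by (simp add: \<nu>_def)
  have m_radial: "snd m \<bullet> snd q = \<nu>\<^sup>2"
    using m[of m] by (simp add: \<nu>_def power2_norm_eq_inner)
  have "outward_unit_normal D\<Phi> q (m /\<^sub>R \<nu>)"
    unfolding outward_unit_normal_def gmet_def
  proof (intro conjI allI impI)
    show "D\<Phi> q (m /\<^sub>R \<nu>) \<bullet> D\<Phi> q (m /\<^sub>R \<nu>) = 1"
      using \<open>\<nu> > 0\<close> by (simp add: linear_scale[OF lin] \<nu>_def power2_norm_eq_inner[symmetric] power2_eq_square)
    show "D\<Phi> q (m /\<^sub>R \<nu>) \<bullet> D\<Phi> q t = 0" if "snd t \<bullet> snd q = 0" for t
      using m[of t] that by (simp add: linear_scale[OF lin])
    show "snd (m /\<^sub>R \<nu>) \<bullet> snd q > 0"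
      using m_radial \<open>\<nu> > 0\<close> by (simp add: power2_eq_square)
  qed
  then show thesis by (rule that)
qed

lemma orthogonal_to_perp_imp_parallel:
  fixes p w :: "'a::real_inner"
  assumes "norm p = 1" and perp: "\<And>v. v \<bullet> p = 0 \<Longrightarrow> w \<bullet> v = 0"
  shows "w = (w \<bullet> p) *\<^sub>R p"
proof -
  define v where "v = w - (w \<bullet> p) *\<^sub>R p"
  have "p \<bullet> p = 1"
    using assms(1) by (simp add: power2_norm_eq_inner[symmetric])
  then have "v \<bullet> p = 0"
    by (simp add: v_def inner_diff_left)
  then have "v \<bullet> v = 0"
    using perp[of v] by (simp add: v_def inner_diff_left inner_commute)
  then show ?thesis
    by (simp add: v_def)
qed

lemma gmet_zeta_radial_eq_0:
  assumes lin: "linear (D\<Phi> (\<zeta>, p))" and "norm p = 1"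
    and iso: "\<And>v w. hmet D\<Phi> \<zeta> p v w = c * (v \<bullet> w)" and "c \<noteq> 0"
    and n: "outward_unit_normal D\<Phi> (\<zeta>, p) n" and "fst n = 0"
  shows "gmet D\<Phi> (\<zeta>, p) (1, 0) (0, p) = 0"
proof -
  obtain w where n_eq: "n = (0, w)"
    using \<open>fst n = 0\<close> by (metis prod.collapse)
  have "w \<bullet> v = 0" if "v \<bullet> p = 0" for v
  proof -
    have "c * (w \<bullet> v) = gmet D\<Phi> (\<zeta>, p) n (0, v)"
      using iso by (simp add: hmet_def n_eq)
    also have "\<dots> = 0"
      using n that unfolding outward_unit_normal_def by simp
    finally show ?thesis
      using \<open>c \<noteq> 0\<close> by simp
  qed
  then have w_eq: "w = (w \<bullet> p) *\<^sub>R p"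
    using orthogonal_to_perp_imp_parallel \<open>norm p = 1\<close> by blast
  have "w \<bullet> p > 0"
    using n by (simp add: outward_unit_normal_def n_eq)
  have n_radial: "n = (w \<bullet> p) *\<^sub>R (0, p)"
    using n_eq w_eq by simp
  have "(w \<bullet> p) * gmet D\<Phi> (\<zeta>, p) (0, p) (1, 0) = gmet D\<Phi> (\<zeta>, p) n (1, 0)"
    by (simp only: n_radial gmet_def linear_scale[OF lin] inner_scaleR_left)
  also have "\<dots> = 0"
    using n unfolding outward_unit_normal_def by simp
  finally show ?thesis
    using \<open>w \<bullet> p > 0\<close> by (simp add: gmet_def inner_commute)
qed

lemma shift_vector_eq:
  assumes lin: "linear (D\<Phi> (\<zeta>, p))"
    and iso: "\<And>v w. hmet D\<Phi> \<zeta> p v w = c * (v \<bullet> w)" and "c \<noteq> 0"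
  shows "c * (shift_vector D\<Phi> \<zeta> p \<bullet> w) = gmet D\<Phi> (\<zeta>, p) (1, 0) (0, w)"
proof -
  let ?R = "\<lambda>N. \<forall>w. c * (N \<bullet> w) = gmet D\<Phi> (\<zeta>, p) (1, 0) (0, w)"
  let ?f = "\<lambda>w. D\<Phi> (\<zeta>, p) (0, w)"
  have "linear (Pair (0::real) :: real^2 \<Rightarrow> coord)"
    by (rule linearI) simp_all
  then have "linear ?f"
    using linear_compose[OF _ lin] by (simp add: comp_def)
  then have R: "?R (adjoint ?f (D\<Phi> (\<zeta>, p) (1, 0)) /\<^sub>R c)"
    using \<open>c \<noteq> 0\<close> by (simp add: gmet_def adjoint_clauses inner_commute)
  have unique: "N = N'" if "?R N" "?R N'" for N N'
  proof -
    have "c * (N \<bullet> v) = c * (N' \<bullet> v)" for v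
      using that by simp
    then have "c * ((N - N') \<bullet> (N - N')) = 0"
      by (simp only: inner_diff_left right_diff_distrib diff_self)
    then show ?thesis
      using \<open>c \<noteq> 0\<close> by simp
  qed
  have "?R (THE N. ?R N)"
    using theI[of ?R, OF R] unique R by blast
  moreover have "shift_vector D\<Phi> \<zeta> p = (THE N. ?R N)"
    using iso by (simp add: shift_vector_def)
  ultimately show ?thesis
    by simp
qed

theorem lemma4:
  fixes \<Phi> :: "real \<times> (real^2) \<Rightarrow> real^3"
    and D\<Phi> :: "real \<times> (real^2) \<Rightarrow> real \<times> (real^2) \<Rightarrow> real^3"
    and L :: real and Q :: "(real^3) set"
    and u :: "real^2 \<Rightarrow> real^2" and \<zeta> :: real
  assumes "toroidal_coordinates \<Phi> D\<Phi> L Q"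
    and "isothermal D\<Phi>"
    and "boundary_compatible D\<Phi>"
    and "\<forall>p. norm p = 1 \<longrightarrow> inner (u p) p = 0"
  shows "\<forall>p. norm p = 1 \<longrightarrow> inner p (u p + shift_vector D\<Phi> \<zeta> p) = 0"
proof (intro allI impI)
  fix p :: "real^2"
  assume "norm p = 1"
  then have "p \<in> disc"
    by (simp add: disc_def)
  then have "(\<Phi> has_derivative D\<Phi> (\<zeta>, p)) (at (\<zeta>, p) within UNIV \<times> disc)"
    and det: "det (vector [D\<Phi> (\<zeta>, p) (1, 0), D\<Phi> (\<zeta>, p) (0, vector [1, 0]),
                D\<Phi> (\<zeta>, p) (0, vector [0, 1])] :: real^3^3) > 0"
    using assms(1) unfolding toroidal_coordinates_def by auto
  then have lin: "linear (D\<Phi> (\<zeta>, p))"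
    by (simp add: has_derivative_linear)
  have inj: "inj (D\<Phi> (\<zeta>, p))"
    using linear_inj_if_det_nonzero[OF lin] det by simp
  obtain c where "c \<noteq> 0" and iso: "\<And>v w. hmet D\<Phi> \<zeta> p v w = c * (v \<bullet> w)"
    using assms(2) \<open>p \<in> disc\<close> unfolding isothermal_def by blast
  obtain n where n: "outward_unit_normal D\<Phi> (\<zeta>, p) n"
    by (rule outward_unit_normal_exists[of D\<Phi> "(\<zeta>, p)", OF lin inj]) (use \<open>norm p = 1\<close> in auto)
  then have "fst n = 0"
    using assms(3) \<open>norm p = 1\<close> unfolding boundary_compatible_def by blast
  then have "gmet D\<Phi> (\<zeta>, p) (1, 0) (0, p) = 0"
    using gmet_zeta_radial_eq_0[OF lin \<open>norm p = 1\<close> iso \<open>c \<noteq> 0\<close> n] by blast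
  then have "p \<bullet> shift_vector D\<Phi> \<zeta> p = 0"
    using shift_vector_eq[OF lin iso \<open>c \<noteq> 0\<close>, of p] \<open>c \<noteq> 0\<close> by (simp add: inner_commute)
  then show "p \<bullet> (u p + shift_vector D\<Phi> \<zeta> p) = 0"
    using assms(4) \<open>norm p = 1\<close> by (simp add: inner_add_right inner_commute)
qed

end
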